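(* Let $K\subset[0,1]^N$ be a self-similar sponge. Then for every $x\in(0,1)^N\cap K$, every tangent $T\in\mathrm{Tan}(K,x)$ is locally self-similar.
   Context: A self-similar sponge is the attractor $K$ (unique nonempty compact set with $K=\bigcup_iS_i(K)$) of a system $\{S_i(y)=k^{-1}y+p_i:[0,1]^N\to[0,1]^N\}_{i=1}^m$ with $k\ge2$ an integer and $p_1,\dots,p_m$ distinct points of $\{0,\frac1k,\dots,\frac{k-1}k\}^N$. A set $F\subset\mathbb{R}^N$ is locally self-similar if for all $x,y\in F$ and $\rho_1,\rho_2>0$ there is a similarity $g:\mathbb{R}^N\to\mathbb{R}^N$ such that $g(B(x,\rho_1)\cap F)$ is a subset of $B(y,\rho_2)\cap F$ and is open relative to $F$. With $\mathrm{exc}(A,B)=\sup_{a\in A}\inf_{b\in B}|a-b|$, closed sets $X_m\to X$ (Attouch–Wets) iff for every $r>0$, $\mathrm{exc}(X_m\cap\overline{B}(\mathbf{0},r),X)\to0$ and $\mathrm{exc}(X\cap\overline{B}(\mathbf{0},r),X_m)\to0$; a closed $T\ni\mathbf{0}$ is in $\mathrm{Tan}(K,x)$ if $r_j^{-1}(K-x)\to T$ for some $r_j\downarrow0$. *)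

theory Defs
  imports "HOL-Analysis.Analysis"
begin

definition grid_points :: "nat \<Rightarrow> (real^'n) set" where
  "grid_points k = {p. \<forall>i. \<exists>j::nat. j < k \<and> p $ i = real j / real k}"

definition sponge_map :: "nat \<Rightarrow> real^'n \<Rightarrow> real^'n \<Rightarrow> real^'n" where
  "sponge_map k p y = (1 / real k) *\<^sub>R y + p"

text \<open>K is a self-similar sponge: the attractor (unique nonempty compact set with
  K = union of S_i(K)) of the system indexed by the finite set P of distinct grid points.\<close>
definition self_similar_sponge :: "(real^'n) set \<Rightarrow> bool" where
  "self_similar_sponge K \<longleftrightarrow>
     (\<exists>k::nat. \<exists>P. k \<ge> 2 \<and> finite P \<and> P \<noteq> {} \<and> P \<subseteq> grid_points k \<and>
        K \<noteq> {} \<and> compact K \<and> K = (\<Union>p\<in>P. sponge_map k p ` K))"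

definition similarity :: "('a::metric_space \<Rightarrow> 'a) \<Rightarrow> bool" where
  "similarity g \<longleftrightarrow> (\<exists>c>0. \<forall>x y. dist (g x) (g y) = c * dist x y)"

definition locally_self_similar :: "('a::metric_space) set \<Rightarrow> bool" where
  "locally_self_similar F \<longleftrightarrow>
     (\<forall>x\<in>F. \<forall>y\<in>F. \<forall>\<rho>1>0. \<forall>\<rho>2>0. \<exists>g. similarity g \<and>
        g ` (ball x \<rho>1 \<inter> F) \<subseteq> ball y \<rho>2 \<inter> F \<and>
        openin (top_of_set F) (g ` (ball x \<rho>1 \<inter> F)))"

text \<open>Excess exc(A,B) = sup_{a in A} inf_{b in B} |a-b|, valued in [0,inf]
  (sup over empty set is 0, inf over empty set is infinity).\<close>
definition exc :: "('a::metric_space) set \<Rightarrow> 'a set \<Rightarrow> ennreal" where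
  "exc A B = (SUP a\<in>A. INF b\<in>B. ennreal (dist a b))"

definition attouch_wets :: "(nat \<Rightarrow> ('a::real_normed_vector) set) \<Rightarrow> 'a set \<Rightarrow> bool" where
  "attouch_wets X Y \<longleftrightarrow>
     (\<forall>r>0. (\<lambda>m. exc (X m \<inter> cball 0 r) Y) \<longlonglongrightarrow> 0 \<and>
            (\<lambda>m. exc (Y \<inter> cball 0 r) (X m)) \<longlonglongrightarrow> 0)"

definition Tan :: "('a::real_normed_vector) set \<Rightarrow> 'a \<Rightarrow> 'a set set" where
  "Tan K x = {T. closed T \<and> 0 \<in> T \<and>
     (\<exists>r::nat \<Rightarrow> real. (\<forall>j. r j > 0) \<and> decseq r \<and> r \<longlonglongrightarrow> 0 \<and>
        attouch_wets (\<lambda>j. (\<lambda>y. (1 / r j) *\<^sub>R (y - x)) ` K) T)}"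

end

theory Submission
  imports Defs
begin

text \<open>
  Choose the level n with k^n \<le> 1/r < k^(n+1). The blow-up (K - x)/r is then
  \<lambda> (K + Z - f): here \<lambda> \<in> [1, k], f \<in> [0,1]^N is the fractional part of k^n x and Z is the
  set of integer addresses of the level-n cells, shifted by the integer part of k^n x. Along a
  subsequence \<lambda> and f converge and, inside any bounded window, the finite pattern Z stabilises
  to some F; hence near the origin the tangent T coincides with \<lambda>0 (K + F - f0), finitely many
  integer translates of a scaled copy of K. Integer translates of the open unit cube are
  disjoint, so around every point of T there is a small similar copy of K \<inter> (0,1)^N lying in T
  exactly. Conversely, every ball of T is similar to a piece of K near x, read at a fine level
  at which the pattern around x is again F; since x is interior, this piece lies in the open
  unit cube. Composing the two similarities gives local self-similarity.
\<close>

section \<open>Dilations and local self-similarity\<close>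

definition dilation :: "real \<Rightarrow> 'a::real_vector \<Rightarrow> 'a \<Rightarrow> 'a" where
  "dilation c d y = c *\<^sub>R (y + d)"

lemma similarity_dilation: "c > 0 \<Longrightarrow> similarity (dilation c (d::'a::real_normed_vector))"
  unfolding similarity_def dilation_def dist_norm
  by (rule exI[of _ c]) (simp flip: scaleR_diff_right)

lemma dilation_dilation:
  "c' \<noteq> 0 \<Longrightarrow> dilation c d (dilation c' d' y) = dilation (c * c') (d' + (1 / c') *\<^sub>R d) y"
  unfolding dilation_def by (simp add: algebra_simps)

lemma inj_dilation: "c \<noteq> 0 \<Longrightarrow> inj (dilation c d)"
  unfolding dilation_def by (rule injI) simp

lemma dilation_image_ball:
  fixes a d :: "'a::real_normed_vector"
  assumes "c > 0"
  shows "dilation c d ` ball a \<rho> = ball (dilation c d a) (c * \<rho>)"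
proof -
  have "(\<lambda>y. y + d) ` ball a \<rho> = ball (a + d) \<rho>"
    using image_add_ball[of d a \<rho>] by (simp add: add.commute)
  moreover have "dilation c d ` ball a \<rho> = (\<lambda>y. c *\<^sub>R y) ` ((\<lambda>y. y + d) ` ball a \<rho>)"
    unfolding dilation_def image_image by simp
  ultimately have "dilation c d ` ball a \<rho> = (\<lambda>y. c *\<^sub>R y) ` ball (a + d) \<rho>"
    by simp
  then show ?thesis
    using assms by (simp add: ball_scale dilation_def)
qed

lemma locally_self_similarI:
  fixes T K V :: "'a::real_normed_vector set"
  assumes charts: "\<And>a \<rho>. a \<in> T \<Longrightarrow> \<rho> > 0 \<Longrightarrow> \<exists>c d. c > 0 \<and> dilation c d ` ball a \<rho> \<subseteq> V \<and>
              (\<forall>y\<in>ball a \<rho>. y \<in> T \<longleftrightarrow> dilation c d y \<in> K)"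
    and copies: "\<And>b \<rho>. b \<in> T \<Longrightarrow> \<rho> > 0 \<Longrightarrow> \<exists>c d. c > 0 \<and> dilation c d ` V \<subseteq> ball b \<rho> \<and>
              (\<forall>w\<in>V. dilation c d w \<in> T \<longleftrightarrow> w \<in> K)"
  shows "locally_self_similar T"
  unfolding locally_self_similar_def
proof (intro ballI allI impI)
  fix a b and \<rho>1 \<rho>2 :: real
  assume "a \<in> T" "b \<in> T" "\<rho>1 > 0" "\<rho>2 > 0"
  obtain c1 d1 where c1: "c1 > 0" and into: "dilation c1 d1 ` ball a \<rho>1 \<subseteq> V"
    and chart: "\<forall>y\<in>ball a \<rho>1. y \<in> T \<longleftrightarrow> dilation c1 d1 y \<in> K"
    using charts[OF \<open>a \<in> T\<close> \<open>\<rho>1 > 0\<close>] by blast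
  obtain c2 d2 where c2: "c2 > 0" and onto: "dilation c2 d2 ` V \<subseteq> ball b \<rho>2"
    and copy: "\<forall>w\<in>V. dilation c2 d2 w \<in> T \<longleftrightarrow> w \<in> K"
    using copies[OF \<open>b \<in> T\<close> \<open>\<rho>2 > 0\<close>] by blast
  define g where "g = dilation (c2 * c1) (d1 + (1 / c1) *\<^sub>R d2)"
  have g: "g y = dilation c2 d2 (dilation c1 d1 y)" for y
    unfolding g_def using c1 by (simp add: dilation_dilation)
  have "y \<in> T \<longleftrightarrow> g y \<in> T" if "y \<in> ball a \<rho>1" for y
    using that chart copy into unfolding g by blast
  then have image_eq: "g ` (ball a \<rho>1 \<inter> T) = g ` ball a \<rho>1 \<inter> T"
    by blast
  have "g ` ball a \<rho>1 \<subseteq> ball b \<rho>2"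
    using into onto unfolding g by blast
  then have "g ` (ball a \<rho>1 \<inter> T) \<subseteq> ball b \<rho>2 \<inter> T"
    unfolding image_eq by blast
  moreover have "openin (top_of_set T) (g ` (ball a \<rho>1 \<inter> T))"
  proof -
    have "open (g ` ball a \<rho>1)"
      unfolding g_def using c1 c2 by (simp add: dilation_image_ball)
    then show ?thesis
      unfolding image_eq by (simp add: openin_open_Int Int_commute)
  qed
  moreover have "similarity g"
    unfolding g_def using c1 c2 by (simp add: similarity_dilation)
  ultimately show "\<exists>g. similarity g \<and> g ` (ball a \<rho>1 \<inter> T) \<subseteq> ball b \<rho>2 \<inter> T \<and>
      openin (top_of_set T) (g ` (ball a \<rho>1 \<inter> T))"
    by blast
qed

section \<open>Attouch--Wets convergence\<close>

lemma exc_lessD: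
  assumes "exc A B < ennreal e" "a \<in> A"
  shows "\<exists>b\<in>B. dist a b < e"
proof -
  have "(INF b\<in>B. ennreal (dist a b)) < ennreal e"
    using assms unfolding exc_def by (meson SUP_upper le_less_trans)
  then show ?thesis
    by (auto simp: INF_less_iff ennreal_less_iff)
qed

lemma eventually_exc_less:
  assumes "(\<lambda>j. exc (A j) (B j)) \<longlonglongrightarrow> 0" "e > 0"
  shows "eventually (\<lambda>j. \<forall>a\<in>A j. \<exists>b\<in>B j. dist a b < e) sequentially"
proof -
  have "eventually (\<lambda>j. exc (A j) (B j) < ennreal e) sequentially"
    using assms by (intro order_tendstoD(2)) auto
  then show ?thesis
    by eventually_elim (blast dest: exc_lessD)
qed

lemma attouch_wets_subseq:
  assumes "attouch_wets X T" "strict_mono \<sigma>"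
  shows "attouch_wets (\<lambda>j. X (\<sigma> j)) T"
  using assms LIMSEQ_subseq_LIMSEQ unfolding attouch_wets_def comp_def by fast

lemma attouch_wets_limit_approx:
  assumes "attouch_wets X T" "t \<in> T" "e > 0"
  shows "eventually (\<lambda>j. \<exists>y\<in>X j. dist t y < e) sequentially"
proof -
  have "(\<lambda>j. exc (T \<inter> cball 0 (norm t + 1)) (X j)) \<longlonglongrightarrow> 0"
    using assms(1) unfolding attouch_wets_def by (simp add: add_nonneg_pos)
  from eventually_exc_less[OF this \<open>e > 0\<close>] show ?thesis
    by eventually_elim (simp add: \<open>t \<in> T\<close>)
qed

lemma attouch_wets_bounded_approx:
  assumes "attouch_wets X T" "R > 0" "e > 0"
  shows "eventually (\<lambda>j. \<forall>y\<in>X j. norm y \<le> R \<longrightarrow> (\<exists>t\<in>T. dist y t < e)) sequentially"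
proof -
  have "(\<lambda>j. exc (X j \<inter> cball 0 R) T) \<longlonglongrightarrow> 0"
    using assms(1,2) unfolding attouch_wets_def by blast
  from eventually_exc_less[OF this \<open>e > 0\<close>] show ?thesis
    by eventually_elim simp
qed

lemma attouch_wets_limit_mem:
  assumes "attouch_wets X T" "closed T" "\<And>j. y j \<in> X j" "y \<longlonglongrightarrow> l"
  shows "l \<in> T"
proof -
  have "\<exists>t\<in>T. dist t l < e" if "e > 0" for e
  proof -
    have "eventually (\<lambda>j. dist (y j) l < min 1 (e / 2)) sequentially"
      using \<open>e > 0\<close> by (intro tendstoD[OF assms(4)]) simp
    moreover have "eventually (\<lambda>j. \<forall>y'\<in>X j. norm y' \<le> norm l + 1 \<longrightarrow> (\<exists>t\<in>T. dist y' t < e / 2))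
        sequentially"
      using assms(1) \<open>e > 0\<close> by (intro attouch_wets_bounded_approx) (auto simp: add_nonneg_pos)
    ultimately have "eventually (\<lambda>j. dist (y j) l < min 1 (e / 2) \<and>
        (\<forall>y'\<in>X j. norm y' \<le> norm l + 1 \<longrightarrow> (\<exists>t\<in>T. dist y' t < e / 2))) sequentially"
      by (rule eventually_conj)
    then obtain j where near: "dist (y j) l < min 1 (e / 2)"
      and approx: "\<forall>y'\<in>X j. norm y' \<le> norm l + 1 \<longrightarrow> (\<exists>t\<in>T. dist y' t < e / 2)"
      using eventually_happens'[OF sequentially_bot] by blast
    have "norm (y j) \<le> norm l + 1"
      using near norm_triangle_sub[of "y j" l] by (simp add: dist_norm)
    then obtain t where "t \<in> T" "dist (y j) t < e / 2"
      using approx assms(3) by blast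
    moreover have "dist t l \<le> dist (y j) t + dist (y j) l"
      by (simp add: dist_triangle3)
    ultimately show ?thesis
      using near by force
  qed
  then show ?thesis
    using assms(2) closed_approachable by blast
qed

lemma attouch_wets_translates_subset:
  fixes K :: "'a::real_normed_vector set"
  assumes conv: "attouch_wets (\<lambda>j. dilation (lam j) (- f j) ` (K + Z j)) T" and "closed T"
    and "lam \<longlonglongrightarrow> lam0" "f \<longlonglongrightarrow> f0" and "\<And>j. F \<subseteq> Z j"
  shows "dilation lam0 (- f0) ` (K + F) \<subseteq> T"
proof
  fix y
  assume "y \<in> dilation lam0 (- f0) ` (K + F)"
  then obtain w where w: "w \<in> K + F" and y: "y = dilation lam0 (- f0) w"
    by blast
  have "w \<in> K + Z j" for j
    using w set_plus_mono2[OF order_refl assms(5)] by blast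
  then have "dilation (lam j) (- f j) w \<in> dilation (lam j) (- f j) ` (K + Z j)" for j
    by blast
  moreover have "(\<lambda>j. dilation (lam j) (- f j) w) \<longlonglongrightarrow> y"
    unfolding y dilation_def by (intro tendsto_intros assms(3,4))
  ultimately show "y \<in> T"
    by (rule attouch_wets_limit_mem[OF conv \<open>closed T\<close>])
qed

lemma norm_scaleR_inverse_le: "1 \<le> L \<Longrightarrow> norm ((1 / L) *\<^sub>R v) \<le> norm v"
  by (simp add: divide_le_eq mult_le_cancel_left1)

lemma mem_translates_window:
  fixes K :: "'a::real_normed_vector set"
  assumes "w \<in> K + Z" "Z \<inter> cball 0 R = F" "1 \<le> L"
    and "norm (dilation L (- g) w) + 2 * C \<le> R" "norm g \<le> C" "\<And>q. q \<in> K \<Longrightarrow> norm q \<le> C"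
  shows "w \<in> K + F"
proof -
  obtain q z where "q \<in> K" "z \<in> Z" and w: "w = q + z"
    using assms(1) by (auto simp: set_plus_def)
  have "z = ((1 / L) *\<^sub>R dilation L (- g) w + g) - q"
    unfolding w dilation_def using assms(3) by simp
  then have "norm z \<le> norm ((1 / L) *\<^sub>R dilation L (- g) w + g) + norm q"
    using norm_triangle_ineq4 by metis
  also have "\<dots> \<le> norm ((1 / L) *\<^sub>R dilation L (- g) w) + norm g + norm q"
    using norm_triangle_ineq by (rule add_right_mono)
  finally have "norm z \<le> norm ((1 / L) *\<^sub>R dilation L (- g) w) + norm g + norm q" .
  then have "z \<in> F"
    using assms(2,4,5) assms(6)[OF \<open>q \<in> K\<close>] \<open>z \<in> Z\<close>
      norm_scaleR_inverse_le[OF assms(3), of "dilation L (- g) w"] by auto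
  then show ?thesis
    unfolding w using \<open>q \<in> K\<close> by (intro set_plus_intro)
qed

lemma attouch_wets_translates_approx:
  fixes K :: "'a::real_normed_vector set"
  assumes conv: "attouch_wets (\<lambda>j. dilation (lam j) (- f j) ` (K + Z j)) T"
    and lam: "lam \<longlonglongrightarrow> lam0" "\<And>j. 1 \<le> lam j"
    and f: "f \<longlonglongrightarrow> f0" "\<And>j. norm (f j) \<le> C"
    and K: "\<And>q. q \<in> K \<Longrightarrow> norm q \<le> C"
    and window: "\<And>j. Z j \<inter> cball 0 R = F"
    and t: "t \<in> T" "norm t + 1 + 2 * C \<le> R"
    and "e > 0"
  shows "\<exists>w\<in>K + F. dist w ((1 / lam0) *\<^sub>R t + f0) < e"
proof -
  have "1 \<le> lam0"
    using lam by (intro LIMSEQ_le_const) auto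
  define p where "p = (1 / lam0) *\<^sub>R t + f0"
  have "eventually (\<lambda>j. \<exists>y\<in>dilation (lam j) (- f j) ` (K + Z j). dist t y < min 1 (e / 3)) sequentially"
    using \<open>e > 0\<close> by (intro attouch_wets_limit_approx[OF conv t(1)]) simp
  moreover have "(\<lambda>j. \<bar>1 / lam j - 1 / lam0\<bar> * norm t) \<longlonglongrightarrow> \<bar>1 / lam0 - 1 / lam0\<bar> * norm t"
    using lam(1) \<open>1 \<le> lam0\<close> by (intro tendsto_intros) auto
  then have "eventually (\<lambda>j. \<bar>1 / lam j - 1 / lam0\<bar> * norm t < e / 3) sequentially"
    using \<open>e > 0\<close> by (intro order_tendstoD(2)) auto
  moreover have "eventually (\<lambda>j. dist (f j) f0 < e / 3) sequentially"
    using \<open>e > 0\<close> by (intro tendstoD[OF f(1)]) simp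
  ultimately have "eventually (\<lambda>j. (\<exists>y\<in>dilation (lam j) (- f j) ` (K + Z j). dist t y < min 1 (e / 3)) \<and>
      \<bar>1 / lam j - 1 / lam0\<bar> * norm t < e / 3 \<and> dist (f j) f0 < e / 3) sequentially"
    by (intro eventually_conj)
  then obtain j w where "w \<in> K + Z j" and near: "dist t (dilation (lam j) (- f j) w) < min 1 (e / 3)"
    and scale: "\<bar>1 / lam j - 1 / lam0\<bar> * norm t < e / 3" and shift: "dist (f j) f0 < e / 3"
    using eventually_happens'[OF sequentially_bot] by blast
  define y where "y = dilation (lam j) (- f j) w"
  have "norm (y - t) < 1" "norm (y - t) < e / 3"
    using near unfolding y_def[symmetric] dist_norm by (simp_all add: norm_minus_commute)
  then have "norm y + 2 * C \<le> R"
    using norm_triangle_sub[of y t] t(2) by simp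
  then have "w \<in> K + F"
    unfolding y_def by (rule mem_translates_window[OF \<open>w \<in> K + Z j\<close> window lam(2) _ f(2) K])
  have "w - p = (1 / lam j) *\<^sub>R (y - t) + (1 / lam j - 1 / lam0) *\<^sub>R t + (f j - f0)"
    unfolding y_def p_def dilation_def using lam(2)[of j] by (simp add: algebra_simps)
  then have "dist w p \<le> norm ((1 / lam j) *\<^sub>R (y - t)) + \<bar>1 / lam j - 1 / lam0\<bar> * norm t + dist (f j) f0"
    by (smt (verit) dist_norm norm_scaleR norm_triangle_ineq)
  also have "\<dots> < e"
    using norm_scaleR_inverse_le[OF lam(2), of j "y - t"] \<open>norm (y - t) < e / 3\<close> scale shift
    by linarith
  finally show ?thesis
    using \<open>w \<in> K + F\<close> unfolding p_def by blast
qed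

lemma attouch_wets_translates_window:
  fixes K :: "'a::real_normed_vector set"
  assumes conv: "attouch_wets (\<lambda>j. dilation (lam j) (- f j) ` (K + Z j)) T"
    and lam: "lam \<longlonglongrightarrow> lam0" "\<And>j. 1 \<le> lam j"
    and f: "f \<longlonglongrightarrow> f0" "\<And>j. norm (f j) \<le> C"
    and K: "compact K" "\<And>q. q \<in> K \<Longrightarrow> norm q \<le> C"
    and window: "finite F" "\<And>j. Z j \<inter> cball 0 R = F"
    and t: "t \<in> T" "norm t + 1 + 2 * C \<le> R"
  shows "t \<in> dilation lam0 (- f0) ` (K + F)"
proof -
  have "1 \<le> lam0"
    using lam by (intro LIMSEQ_le_const) auto
  have "K + F = {q + z |q z. q \<in> K \<and> z \<in> F}"
    by (auto simp: set_plus_def)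
  then have "closed (K + F)"
    using compact_sums[OF K(1) finite_imp_compact[OF window(1)]] by (simp add: compact_imp_closed)
  moreover have "\<forall>e>0. \<exists>w\<in>K + F. dist w ((1 / lam0) *\<^sub>R t + f0) < e"
    using attouch_wets_translates_approx[OF conv lam f K(2) window(2) t] by blast
  ultimately have "(1 / lam0) *\<^sub>R t + f0 \<in> K + F"
    by (simp add: closed_approachable)
  moreover have "t = dilation lam0 (- f0) ((1 / lam0) *\<^sub>R t + f0)"
    unfolding dilation_def using \<open>1 \<le> lam0\<close> by simp
  ultimately show ?thesis
    by blast
qed

lemma attouch_wets_translates_local_eq:
  fixes K :: "'a::real_normed_vector set"
  assumes conv: "attouch_wets (\<lambda>j. dilation (lam j) (- f j) ` (K + Z j)) T" and "closed T"
    and lam: "lam \<longlonglongrightarrow> lam0" "\<And>j. 1 \<le> lam j"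
    and f: "f \<longlonglongrightarrow> f0" "\<And>j. norm (f j) \<le> C"
    and K: "compact K" "\<And>q. q \<in> K \<Longrightarrow> norm q \<le> C"
    and window: "finite F" "\<And>j. Z j \<inter> cball 0 R = F"
    and t: "norm t + 1 + 2 * C \<le> R"
  shows "t \<in> T \<longleftrightarrow> t \<in> dilation lam0 (- f0) ` (K + F)"
proof
  show "t \<in> T \<Longrightarrow> t \<in> dilation lam0 (- f0) ` (K + F)"
    using attouch_wets_translates_window[OF conv lam f K window _ t] by blast
  have "dilation lam0 (- f0) ` (K + F) \<subseteq> T"
    using window(2) by (intro attouch_wets_translates_subset[OF conv \<open>closed T\<close> lam(1) f(1)]) blast
  then show "t \<in> dilation lam0 (- f0) ` (K + F) \<Longrightarrow> t \<in> T"
    by blast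
qed

lemma finite_range_constant_subseq:
  fixes G :: "nat \<Rightarrow> 'a"
  assumes "finite (range G)"
  shows "\<exists>s :: nat \<Rightarrow> nat. \<exists>F. strict_mono s \<and> (\<forall>j. G (s j) = F)"
proof -
  obtain j0 where infinite: "infinite {j. G j = G j0}"
    using pigeonhole_infinite[OF infinite_UNIV_nat, of G] assms by auto
  have "strict_mono (enumerate {j. G j = G j0})"
    using strict_mono_enumerate[OF infinite] .
  moreover have "G (enumerate {j. G j = G j0} j) = G j0" for j
    using enumerate_in_set[OF infinite] by simp
  ultimately show ?thesis
    by blast
qed

lemma compact_finite_range_subseq:
  fixes u :: "nat \<Rightarrow> 'a::metric_space" and G :: "nat \<Rightarrow> 'b"
  assumes "compact S" "\<And>j. u j \<in> S" "finite (range G)"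
  obtains \<tau> :: "nat \<Rightarrow> nat" and l F
  where "strict_mono \<tau>" "l \<in> S" "(\<lambda>j. u (\<tau> j)) \<longlonglongrightarrow> l" "\<And>j. G (\<tau> j) = F"
proof -
  obtain s :: "nat \<Rightarrow> nat" and F where s: "strict_mono s" and F: "\<And>j. G (s j) = F"
    using finite_range_constant_subseq[OF assms(3)] by blast
  have "\<forall>j. u (s j) \<in> S"
    using assms(2) by blast
  then obtain l \<sigma> where l: "l \<in> S" and \<sigma>: "strict_mono \<sigma>"
    and lim: "((\<lambda>j. u (s j)) \<circ> \<sigma>) \<longlonglongrightarrow> l"
    by (rule seq_compactE[OF compact_imp_seq_compact[OF assms(1)]])
  have "strict_mono (s \<circ> \<sigma>)"
    using s \<sigma> by (rule strict_mono_o)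
  moreover have "(\<lambda>j. u ((s \<circ> \<sigma>) j)) \<longlonglongrightarrow> l"
    using lim by (simp add: comp_def)
  moreover have "G ((s \<circ> \<sigma>) j) = F" for j
    using F by simp
  ultimately show ?thesis
    using l by (intro that)
qed

section \<open>Integer translates of the unit cube\<close>

definition int_vec :: "real^'n \<Rightarrow> bool" where
  "int_vec z \<longleftrightarrow> (\<forall>i. z $ i \<in> \<int>)"

lemma int_vec_diff: "int_vec a \<Longrightarrow> int_vec b \<Longrightarrow> int_vec (a - b)"
  unfolding int_vec_def by simp

lemma finite_int_vecs_cball: "finite {z::real^'n. int_vec z \<and> norm z \<le> R}"
proof -
  define S where "S = real_of_int ` {-\<lceil>R\<rceil>..\<lceil>R\<rceil>}"
  have "z \<in> vec_lambda ` (UNIV \<rightarrow>\<^sub>E S)" if "int_vec z" "norm z \<le> R" for z :: "real^'n"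
  proof -
    have "z $ i \<in> S" for i
    proof -
      obtain m where m: "z $ i = of_int m"
        using \<open>int_vec z\<close> Ints_cases unfolding int_vec_def by metis
      have "\<bar>z $ i\<bar> \<le> R"
        using component_le_norm_cart[of z i] \<open>norm z \<le> R\<close> by linarith
      then have "\<bar>m\<bar> \<le> \<lceil>R\<rceil>"
        using m le_of_int_ceiling[of R] by linarith
      then show ?thesis
        unfolding S_def m by (auto simp: abs_le_iff)
    qed
    then show ?thesis
      by (intro image_eqI[of _ _ "vec_nth z"]) (auto simp: PiE_iff)
  qed
  then have "{z::real^'n. int_vec z \<and> norm z \<le> R} \<subseteq> vec_lambda ` (UNIV \<rightarrow>\<^sub>E S)"
    by blast
  moreover have "finite (UNIV \<rightarrow>\<^sub>E S :: ('n \<Rightarrow> real) set)"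
    unfolding S_def by (simp add: finite_PiE)
  ultimately show ?thesis
    using finite_subset by blast
qed

lemma unit_cube_int_translate_eq:
  fixes q w z z' :: "real^'n"
  assumes "int_vec z" "int_vec z'" "q \<in> cbox 0 1" "w \<in> box 0 1" "q + z = w + z'"
  shows "z = z'"
proof -
  have "z $ i = z' $ i" for i
  proof -
    obtain m m' where m: "z $ i = of_int m" "z' $ i = of_int m'"
      using assms(1,2) Ints_cases unfolding int_vec_def by metis
    have "0 \<le> q $ i" "q $ i \<le> 1" "0 < w $ i" "w $ i < 1"
      using assms(3,4) by (auto simp: mem_box_cart)
    moreover have "q $ i + z $ i = w $ i + z' $ i"
      using assms(5) by (metis vector_add_component)
    ultimately have "of_int (m - m') < (1::real)" "of_int (m' - m) < (1::real)"
      unfolding m by simp_all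
    then show ?thesis
      unfolding m by simp
  qed
  then show ?thesis
    by (simp add: vec_eq_iff)
qed

lemma mem_translates_unit_cube_iff:
  fixes K F :: "(real^'n) set"
  assumes "\<forall>z\<in>F. int_vec z" "z0 \<in> F" "K \<subseteq> cbox 0 1" "p \<in> box 0 1"
  shows "p + z0 \<in> K + F \<longleftrightarrow> p \<in> K"
proof
  assume "p + z0 \<in> K + F"
  then obtain q z where "q \<in> K" "z \<in> F" and eq: "q + z = p + z0"
    by (auto simp: set_plus_def)
  then have "z = z0"
    using unit_cube_int_translate_eq assms by blast
  then show "p \<in> K"
    using \<open>q \<in> K\<close> eq by simp
next
  assume "p \<in> K"
  then show "p + z0 \<in> K + F"
    using assms(2) by (rule set_plus_intro)
qed

lemma norm_diff_unit_cube:
  fixes u w :: "real^'n"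
  assumes "u \<in> cbox 0 1" "w \<in> cbox 0 1"
  shows "norm (u - w) \<le> norm (1::real^'n)"
proof (rule norm_le_componentwise_cart)
  fix i
  have "0 \<le> u $ i" "u $ i \<le> 1" "0 \<le> w $ i" "w $ i \<le> 1"
    using assms by (auto simp: mem_box_cart)
  then show "norm ((u - w) $ i) \<le> norm ((1::real^'n) $ i)"
    by auto
qed

section \<open>Self-similar sponges\<close>

lemma power_rescaling_bracket:
  fixes b r :: real
  assumes "1 < b" "0 < r" "r \<le> 1"
  shows "\<exists>n. 1 \<le> 1 / (r * b ^ n) \<and> 1 / (r * b ^ n) \<le> b"
proof -
  define n where "n = nat \<lfloor>log b (1 / r)\<rfloor>"
  have "\<lfloor>log b (1 / r)\<rfloor> = int n"
    unfolding n_def using assms by simp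
  then have "b powr real n \<le> 1 / r \<and> 1 / r < b powr (1 + real n)"
    using floor_log_eq_powr_iff[of "1 / r" b "int n"] assms by (simp add: add.commute)
  then have "b ^ n \<le> 1 / r" "1 / r < b * b ^ n"
    using assms by (simp_all add: powr_realpow powr_add)
  then show ?thesis
    using assms by (intro exI[of _ n]) (simp add: field_simps)
qed

lemma compact_digit_invariant_subset_unit_interval:
  fixes S :: "real set" and k :: nat
  assumes "compact S" "k \<ge> 2"
    and digits: "\<And>s. s \<in> S \<Longrightarrow> \<exists>t\<in>S. \<exists>j. j < k \<and> s = (t + real j) / real k"
  shows "S \<subseteq> {0..1}"
proof (cases "S = {}")
  case False
  obtain smax where "smax \<in> S" and smax: "\<forall>s\<in>S. s \<le> smax"
    using compact_attains_sup[OF assms(1) False] by blast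
  obtain smin where "smin \<in> S" and smin: "\<forall>s\<in>S. smin \<le> s"
    using compact_attains_inf[OF assms(1) False] by blast
  have k: "real k \<ge> 2"
    using assms(2) by simp
  obtain t j where "t \<in> S" "j < k" "smax = (t + real j) / real k"
    using digits[OF \<open>smax \<in> S\<close>] by blast
  moreover have "real j \<le> real k - 1" "t \<le> smax"
    using \<open>j < k\<close> \<open>t \<in> S\<close> smax by auto
  ultimately have "(real k - 1) * smax \<le> (real k - 1) * 1"
    using k by (simp add: field_simps)
  then have "smax \<le> 1"
    using k by (simp add: mult_le_cancel_left_pos)
  obtain t' j' where "t' \<in> S" "smin = (t' + real j') / real k"
    using digits[OF \<open>smin \<in> S\<close>] by blast
  moreover have "smin \<le> t'"
    using \<open>t' \<in> S\<close> smin by blast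
  ultimately have "(real k - 1) * 0 \<le> (real k - 1) * smin"
    using k by (simp add: field_simps)
  then have "0 \<le> smin"
    using k by (simp add: zero_le_mult_iff)
  show ?thesis
    using smax smin \<open>smax \<le> 1\<close> \<open>0 \<le> smin\<close> by force
qed simp

text \<open>The level-n cells of the sponge are the sets \<open>dilation (1 / k^n) a ` K\<close> with
  \<open>a \<in> addresses k P n\<close> (lemma \<open>sponge.mem_iff_cell\<close>).\<close>

primrec addresses :: "nat \<Rightarrow> (real^'n) set \<Rightarrow> nat \<Rightarrow> (real^'n) set" where
  "addresses k P 0 = {0}"
| "addresses k P (Suc n) = (\<lambda>(a, p). real k *\<^sub>R (a + p)) ` (addresses k P n \<times> P)"

lemma addresses_range:
  assumes "P \<subseteq> grid_points k" "k \<ge> 1" "a \<in> addresses k P n"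
  shows "int_vec a \<and> (\<forall>i. 0 \<le> a $ i \<and> a $ i \<le> real k ^ n - 1)"
  using assms(3)
proof (induction n arbitrary: a)
  case 0
  then show ?case
    by (simp add: int_vec_def)
next
  case (Suc n)
  then obtain b p where b: "b \<in> addresses k P n" and "p \<in> P" and a: "a = real k *\<^sub>R (b + p)"
    by auto
  have "a $ i \<in> \<int> \<and> 0 \<le> a $ i \<and> a $ i \<le> real k ^ Suc n - 1" for i
  proof -
    obtain j :: nat where "j < k" and p: "p $ i = real j / real k"
      using \<open>p \<in> P\<close> assms(1) unfolding grid_points_def by blast
    have ai: "a $ i = real k * b $ i + real j"
      using a p assms(2) by (simp add: field_simps)
    have "b $ i \<in> \<int>" "0 \<le> b $ i" "b $ i \<le> real k ^ n - 1"
      using Suc.IH[OF b] unfolding int_vec_def by auto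
    moreover have "real j \<le> real k - 1"
      using \<open>j < k\<close> by linarith
    ultimately show ?thesis
      unfolding ai using mult_left_mono[of "b $ i" "real k ^ n - 1" "real k"]
      by (auto simp: algebra_simps)
  qed
  then show ?case
    unfolding int_vec_def by blast
qed

definition address_window :: "nat \<Rightarrow> (real^'n) set \<Rightarrow> nat \<Rightarrow> real^'n \<Rightarrow> real \<Rightarrow> (real^'n) set" where
  "address_window k P n D R = (\<lambda>a. a - D) ` addresses k P n \<inter> cball 0 R"

lemma address_window_subset:
  assumes "P \<subseteq> grid_points k" "k \<ge> 1" "int_vec D"
  shows "address_window k P n D R \<subseteq> {z. int_vec z \<and> norm z \<le> R}"
  using addresses_range[OF assms(1,2)] assms(3) unfolding address_window_def by (auto simp: int_vec_diff)

locale sponge =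
  fixes k :: nat and P :: "(real^'n) set" and K :: "(real^'n) set"
  assumes k_ge_2: "k \<ge> 2" and digits: "P \<subseteq> grid_points k" and compact_K: "compact K"
    and invariant: "K = (\<Union>p\<in>P. sponge_map k p ` K)"
begin

lemma mem_iff_sponge_map: "u \<in> K \<longleftrightarrow> (\<exists>p\<in>P. \<exists>y\<in>K. u = sponge_map k p y)"
proof -
  have "u \<in> (\<Union>p\<in>P. sponge_map k p ` K) \<longleftrightarrow> (\<exists>p\<in>P. \<exists>y\<in>K. u = sponge_map k p y)"
    by blast
  then show ?thesis
    by (simp only: invariant[symmetric])
qed

lemma subset_unit_cube: "K \<subseteq> cbox 0 1"
proof -
  have "(\<lambda>y. y $ i) ` K \<subseteq> {0..1}" for i
  proof (rule compact_digit_invariant_subset_unit_interval[OF _ k_ge_2])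
    show "compact ((\<lambda>y. y $ i) ` K)"
      by (rule compact_continuous_image[OF _ compact_K]) (intro continuous_intros)
    fix s
    assume "s \<in> (\<lambda>y. y $ i) ` K"
    then obtain u where "u \<in> K" and s: "s = u $ i"
      by blast
    then obtain p y where "p \<in> P" "y \<in> K" and u: "u = sponge_map k p y"
      using mem_iff_sponge_map[of u] by blast
    obtain j where "j < k" "p $ i = real j / real k"
      using \<open>p \<in> P\<close> digits unfolding grid_points_def by blast
    then have "s = (y $ i + real j) / real k"
      unfolding s u by (simp add: sponge_map_def add_divide_distrib)
    then show "\<exists>t\<in>(\<lambda>y. y $ i) ` K. \<exists>j<k. s = (t + real j) / real k"
      using \<open>y \<in> K\<close> \<open>j < k\<close> by blast
  qed
  then show ?thesis
    by (auto simp: mem_box_cart image_subset_iff)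
qed

lemma norm_le_norm_one: "q \<in> K \<Longrightarrow> norm q \<le> norm (1::real^'n)"
  using norm_diff_unit_cube[of q 0] subset_unit_cube by (auto simp: mem_box_cart)

lemma mem_iff_cell:
  "u \<in> K \<longleftrightarrow> (\<exists>a\<in>addresses k P n. \<exists>q\<in>K. u = dilation (1 / real k ^ n) a q)"
proof (induction n arbitrary: u)
  case 0
  then show ?case
    by (simp add: dilation_def)
next
  case (Suc n)
  have cell: "dilation (1 / real k ^ Suc n) (real k *\<^sub>R (a + p)) y =
      dilation (1 / real k ^ n) a (sponge_map k p y)" for a p y
    using k_ge_2 by (simp add: dilation_def sponge_map_def algebra_simps)
  show ?case
  proof
    assume "u \<in> K"
    then obtain a q where a: "a \<in> addresses k P n" and "q \<in> K" and u: "u = dilation (1 / real k ^ n) a q"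
      using Suc.IH[of u] by blast
    then obtain p y where "p \<in> P" "y \<in> K" and q: "q = sponge_map k p y"
      using mem_iff_sponge_map[of q] by blast
    then have "real k *\<^sub>R (a + p) \<in> addresses k P (Suc n)"
      using a by force
    then show "\<exists>a\<in>addresses k P (Suc n). \<exists>q\<in>K. u = dilation (1 / real k ^ Suc n) a q"
      using \<open>y \<in> K\<close> unfolding u q cell[symmetric] by blast
  next
    assume "\<exists>a\<in>addresses k P (Suc n). \<exists>q\<in>K. u = dilation (1 / real k ^ Suc n) a q"
    then obtain a' y where "a' \<in> addresses k P (Suc n)" "y \<in> K"
      and u': "u = dilation (1 / real k ^ Suc n) a' y"
      by blast
    then obtain a p where "a \<in> addresses k P n" "p \<in> P" and "a' = real k *\<^sub>R (a + p)"
      by auto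
    then have u: "u = dilation (1 / real k ^ n) a (sponge_map k p y)"
      using u' cell by simp
    moreover have "sponge_map k p y \<in> K"
      using mem_iff_sponge_map[of "sponge_map k p y"] \<open>p \<in> P\<close> \<open>y \<in> K\<close> by blast
    ultimately show "u \<in> K"
      using Suc.IH[of u] \<open>a \<in> addresses k P n\<close> by blast
  qed
qed

lemma cell_mem_iff:
  assumes "a \<in> addresses k P n" "w \<in> box 0 1"
  shows "dilation (1 / real k ^ n) a w \<in> K \<longleftrightarrow> w \<in> K"
proof
  assume "dilation (1 / real k ^ n) a w \<in> K"
  then obtain a' q where "a' \<in> addresses k P n" "q \<in> K"
    and "dilation (1 / real k ^ n) a w = dilation (1 / real k ^ n) a' q"
    using mem_iff_cell[of "dilation (1 / real k ^ n) a w" n] by blast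
  moreover have "real k ^ n \<noteq> 0"
    using k_ge_2 by simp
  ultimately have eq: "q + a' = w + a" and "int_vec a" "int_vec a'"
    using addresses_range[OF digits] assms(1) k_ge_2 by (auto simp: dilation_def)
  then have "a' = a"
    using unit_cube_int_translate_eq \<open>q \<in> K\<close> subset_unit_cube assms(2) by blast
  then show "w \<in> K"
    using \<open>q \<in> K\<close> eq by simp
next
  assume "w \<in> K"
  then show "dilation (1 / real k ^ n) a w \<in> K"
    using assms(1) mem_iff_cell[of "dilation (1 / real k ^ n) a w" n] by blast
qed

lemma cell_in_open_cube:
  assumes "a \<in> addresses k P n" "w \<in> box 0 1"
  shows "dilation (1 / real k ^ n) a w \<in> box 0 1"
proof -
  have "0 < w $ i + a $ i \<and> w $ i + a $ i < real k ^ n" for i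
  proof -
    have "0 \<le> a $ i" "a $ i \<le> real k ^ n - 1" "0 < w $ i" "w $ i < 1"
      using addresses_range[OF digits _ assms(1)] k_ge_2 assms(2) by (auto simp: mem_box_cart)
    then show ?thesis
      by linarith
  qed
  then show ?thesis
    using k_ge_2 by (simp add: mem_box_cart dilation_def field_simps)
qed

lemma blowup_eq_translates:
  assumes "r > 0"
  shows "(\<lambda>y. (1 / r) *\<^sub>R (y - x)) ` K =
    dilation (1 / (r * real k ^ n)) (- (real k ^ n *\<^sub>R x - D)) ` (K + (\<lambda>a. a - D) ` addresses k P n)"
    (is "?blowup = ?translates")
proof (intro equalityI subsetI)
  have point: "(1 / r) *\<^sub>R (dilation (1 / real k ^ n) a q - x) =
      dilation (1 / (r * real k ^ n)) (- (real k ^ n *\<^sub>R x - D)) (q + (a - D))" for a q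
    using assms k_ge_2 by (simp add: dilation_def algebra_simps)
  fix v
  {
    assume "v \<in> ?blowup"
    then obtain u where "u \<in> K" and v: "v = (1 / r) *\<^sub>R (u - x)"
      by blast
    then obtain a q where "a \<in> addresses k P n" "q \<in> K" and u: "u = dilation (1 / real k ^ n) a q"
      using mem_iff_cell[of u n] by blast
    then have "q + (a - D) \<in> K + (\<lambda>a. a - D) ` addresses k P n"
      by (intro set_plus_intro imageI)
    then show "v \<in> ?translates"
      unfolding v u point by (rule imageI)
  next
    assume "v \<in> ?translates"
    then obtain q a where "q \<in> K" "a \<in> addresses k P n"
      and v: "v = dilation (1 / (r * real k ^ n)) (- (real k ^ n *\<^sub>R x - D)) (q + (a - D))"
      by (auto simp: set_plus_def)
    then have "dilation (1 / real k ^ n) a q \<in> K"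
      using mem_iff_cell[of "dilation (1 / real k ^ n) a q" n] by blast
    then show "v \<in> ?blowup"
      unfolding v point[symmetric] by (rule imageI)
  }
qed

lemma window_cell_mem_iff:
  assumes "address_window k P n D R = F"
    and "norm w + norm (1::real^'n) \<le> R"
  shows "dilation (1 / real k ^ n) D w \<in> K \<longleftrightarrow> w \<in> K + F"
proof
  assume "dilation (1 / real k ^ n) D w \<in> K"
  then obtain a q where a: "a \<in> addresses k P n" and "q \<in> K"
    and "dilation (1 / real k ^ n) D w = dilation (1 / real k ^ n) a q"
    using mem_iff_cell[of "dilation (1 / real k ^ n) D w" n] by blast
  moreover have "real k ^ n \<noteq> 0"
    using k_ge_2 by simp
  ultimately have "w + D = q + a"
    by (auto simp: dilation_def)
  then have w: "w = q + (a - D)"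
    by (simp add: algebra_simps eq_diff_eq)
  have "norm (a - D) \<le> norm w + norm q"
    using norm_triangle_ineq4[of w q] by (simp add: w)
  then have "a - D \<in> F"
    using assms a norm_le_norm_one[OF \<open>q \<in> K\<close>] unfolding address_window_def by force
  with \<open>q \<in> K\<close> show "w \<in> K + F"
    unfolding w by (rule set_plus_intro)
next
  assume "w \<in> K + F"
  then obtain q a where "q \<in> K" "a \<in> addresses k P n" and w: "w = q + (a - D)"
    using assms(1) unfolding address_window_def by (auto simp: set_plus_def)
  then have "dilation (1 / real k ^ n) D w = dilation (1 / real k ^ n) a q"
    by (simp add: dilation_def algebra_simps)
  then show "dilation (1 / real k ^ n) D w \<in> K"
    using \<open>q \<in> K\<close> \<open>a \<in> addresses k P n\<close> mem_iff_cell[of "dilation (1 / real k ^ n) a q" n] by auto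
qed

lemma dist_dilation_frac_le:
  fixes x D w :: "real^'n"
  assumes "real k ^ n *\<^sub>R x - D \<in> cbox 0 1"
  shows "dist x (dilation (1 / real k ^ n) D w) \<le> (norm w + norm (1::real^'n)) / real k ^ n"
proof -
  have "dilation (1 / real k ^ n) D w - x = (1 / real k ^ n) *\<^sub>R (w - (real k ^ n *\<^sub>R x - D))"
    using k_ge_2 by (simp add: dilation_def algebra_simps)
  then have "dist x (dilation (1 / real k ^ n) D w) = norm (w - (real k ^ n *\<^sub>R x - D)) / real k ^ n"
    by (simp add: dist_norm norm_minus_commute[of x])
  also have "\<dots> \<le> (norm w + norm (1::real^'n)) / real k ^ n"
    using norm_triangle_ineq4[of w "real k ^ n *\<^sub>R x - D"] norm_diff_unit_cube[OF assms, of 0]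
    by (intro divide_right_mono) (auto simp: mem_box_cart)
  finally show ?thesis .
qed

lemma dilated_cell_translate_mem_iff:
  assumes "\<forall>z\<in>F. int_vec z" "z0 \<in> F" "v \<in> addresses k P m" "w \<in> box 0 1" "c \<noteq> 0"
  shows "dilation c d (dilation (1 / real k ^ m) v w + z0) \<in> dilation c d ` (K + F) \<longleftrightarrow> w \<in> K"
proof -
  have "dilation c d (dilation (1 / real k ^ m) v w + z0) \<in> dilation c d ` (K + F) \<longleftrightarrow>
      dilation (1 / real k ^ m) v w + z0 \<in> K + F"
    using assms(5) by (intro inj_image_mem_iff inj_dilation)
  also have "\<dots> \<longleftrightarrow> dilation (1 / real k ^ m) v w \<in> K"
    using assms(1,2) subset_unit_cube cell_in_open_cube[OF assms(3,4)] by (rule mem_translates_unit_cube_iff)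
  also have "\<dots> \<longleftrightarrow> w \<in> K"
    using assms(3,4) by (rule cell_mem_iff)
  finally show ?thesis .
qed

lemma finite_range_address_windows:
  fixes n :: "nat \<Rightarrow> nat" and D :: "nat \<Rightarrow> real^'n"
  assumes "\<And>j. int_vec (D j)"
  shows "finite (range (\<lambda>j. address_window k P (n j) (D j) R))"
proof -
  have "range (\<lambda>j. address_window k P (n j) (D j) R) \<subseteq> Pow {z. int_vec z \<and> norm z \<le> R}"
    using address_window_subset[OF digits _ assms] k_ge_2 by auto
  moreover have "finite (Pow {z::real^'n. int_vec z \<and> norm z \<le> R})"
    using finite_int_vecs_cball[of R] by simp
  ultimately show ?thesis
    by (rule finite_subset)
qed

section \<open>Tangents of a sponge\<close>

lemma tangent_normal_form:
  assumes "T \<in> Tan K x"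
  obtains lam D n where "\<And>j. 1 \<le> lam j \<and> lam j \<le> real k"
    and "\<And>j. int_vec (D j)" and "\<And>j. real k ^ n j *\<^sub>R x - D j \<in> cbox 0 1"
    and "(\<lambda>j. 1 / real k ^ n j) \<longlonglongrightarrow> 0"
    and "attouch_wets (\<lambda>j. dilation (lam j) (- (real k ^ n j *\<^sub>R x - D j)) `
           (K + (\<lambda>a. a - D j) ` addresses k P (n j))) T"
proof -
  obtain r where r_pos: "\<And>j. r j > 0" and r_lim: "r \<longlonglongrightarrow> 0"
    and conv: "attouch_wets (\<lambda>j. (\<lambda>y. (1 / r j) *\<^sub>R (y - x)) ` K) T"
    using assms unfolding Tan_def by blast
  obtain N where N: "\<And>j. j \<ge> N \<Longrightarrow> r j < 1"
    using order_tendstoD(2)[OF r_lim, of 1] by (auto simp: eventually_sequentially)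
  define \<rho> where "\<rho> j = r (j + N)" for j
  have \<rho>: "0 < \<rho> j" "\<rho> j \<le> 1" for j
    unfolding \<rho>_def using r_pos N[of "j + N"] by auto
  have "\<exists>m. 1 \<le> 1 / (\<rho> j * real k ^ m) \<and> 1 / (\<rho> j * real k ^ m) \<le> real k" for j
    using \<rho>[of j] k_ge_2 by (intro power_rescaling_bracket) simp_all
  then obtain n where n: "\<And>j. 1 \<le> 1 / (\<rho> j * real k ^ n j) \<and> 1 / (\<rho> j * real k ^ n j) \<le> real k"
    by metis
  define D :: "nat \<Rightarrow> real^'n" where "D j = (\<chi> i. of_int \<lfloor>real k ^ n j * x $ i\<rfloor>)" for j
  define lam where "lam j = 1 / (\<rho> j * real k ^ n j)" for j
  show ?thesis
  proof (rule that)
    show "1 \<le> lam j \<and> lam j \<le> real k" for j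
      unfolding lam_def by (rule n)
    show "int_vec (D j)" for j
      unfolding int_vec_def D_def by simp
    show "real k ^ n j *\<^sub>R x - D j \<in> cbox 0 1" for j
      unfolding D_def by (simp add: mem_box_cart) linarith
    have bound: "norm (1 / real k ^ n j) \<le> real k * \<rho> j" for j
    proof -
      have "0 < \<rho> j * real k ^ n j"
        using \<rho>[of j] k_ge_2 by simp
      then show ?thesis
        using n[of j] k_ge_2 by (simp add: field_simps)
    qed
    have "(\<lambda>j. real k * \<rho> j) \<longlonglongrightarrow> 0"
      unfolding \<rho>_def using LIMSEQ_ignore_initial_segment[OF r_lim, of N]
      by (auto intro: tendsto_mult_right_zero)
    then show "(\<lambda>j. 1 / real k ^ n j) \<longlonglongrightarrow> 0"
      by (rule Lim_null_comparison[OF always_eventually[OF allI[OF bound]]])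
    have "strict_mono (\<lambda>j. j + N)"
      by (simp add: strict_mono_def)
    then have "attouch_wets (\<lambda>j. (\<lambda>y. (1 / \<rho> j) *\<^sub>R (y - x)) ` K) T"
      unfolding \<rho>_def by (rule attouch_wets_subseq[OF conv])
    moreover have "(\<lambda>y. (1 / \<rho> j) *\<^sub>R (y - x)) ` K = dilation (lam j) (- (real k ^ n j *\<^sub>R x - D j)) `
        (K + (\<lambda>a. a - D j) ` addresses k P (n j))" for j
      unfolding lam_def by (rule blowup_eq_translates[OF \<rho>(1)])
    ultimately show "attouch_wets (\<lambda>j. dilation (lam j) (- (real k ^ n j *\<^sub>R x - D j)) `
        (K + (\<lambda>a. a - D j) ` addresses k P (n j))) T"
      by simp
  qed
qed

lemma tangent_local_model:
  assumes "T \<in> Tan K x"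
  obtains lam0 f0 F where "1 \<le> lam0" "f0 \<in> cbox 0 1" "\<forall>z\<in>F. int_vec z"
    and "\<And>t. norm t + 1 + 2 * norm (1::real^'n) \<le> R \<Longrightarrow>
           t \<in> T \<longleftrightarrow> t \<in> dilation lam0 (- f0) ` (K + F)"
    and "\<And>\<delta>. \<delta> > 0 \<Longrightarrow> \<exists>n D. 1 / real k ^ n < \<delta> \<and> real k ^ n *\<^sub>R x - D \<in> cbox 0 1 \<and>
           address_window k P n D R = F"
proof -
  obtain n D lam where lam: "\<And>j. 1 \<le> lam j \<and> lam j \<le> real k"
    and D: "\<And>j. int_vec (D j)" and frac: "\<And>j. real k ^ n j *\<^sub>R x - D j \<in> cbox 0 1"
    and levels: "(\<lambda>j. 1 / real k ^ n j) \<longlonglongrightarrow> 0"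
    and conv: "attouch_wets (\<lambda>j. dilation (lam j) (- (real k ^ n j *\<^sub>R x - D j)) `
           (K + (\<lambda>a. a - D j) ` addresses k P (n j))) T"
    by (rule tangent_normal_form[OF assms]) blast
  define f where "f j = real k ^ n j *\<^sub>R x - D j" for j
  have "compact ({1..real k} \<times> cbox (0::real^'n) 1)"
    by (intro compact_Times compact_Icc compact_cbox)
  moreover have "(lam j, f j) \<in> {1..real k} \<times> cbox 0 1" for j
    using lam frac unfolding f_def by simp
  moreover have "finite (range (\<lambda>j. address_window k P (n j) (D j) R))"
    using D by (rule finite_range_address_windows)
  ultimately obtain \<tau> l F where \<tau>: "strict_mono \<tau>" and l: "l \<in> {1..real k} \<times> cbox 0 1"
    and lim: "(\<lambda>j. (lam (\<tau> j), f (\<tau> j))) \<longlonglongrightarrow> l"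
    and F: "\<And>j. address_window k P (n (\<tau> j)) (D (\<tau> j)) R = F"
    by (rule compact_finite_range_subseq[where u = "\<lambda>j. (lam j, f j)"]) blast
  obtain lam0 f0 where l_eq: "l = (lam0, f0)"
    by (cases l)
  have F_int: "F \<subseteq> {z. int_vec z \<and> norm z \<le> R}"
    unfolding F[of 0, symmetric] using address_window_subset[OF digits _ D] k_ge_2 by simp
  show ?thesis
  proof (rule that)
    show "1 \<le> lam0" "f0 \<in> cbox 0 1"
      using l unfolding l_eq by auto
    show "\<forall>z\<in>F. int_vec z"
      using F_int by blast
    show "t \<in> T \<longleftrightarrow> t \<in> dilation lam0 (- f0) ` (K + F)"
      if "norm t + 1 + 2 * norm (1::real^'n) \<le> R" for t
    proof (rule attouch_wets_translates_local_eq[OF _ _ _ _ _ _ compact_K norm_le_norm_one _ _ that])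
      show "attouch_wets (\<lambda>j. dilation (lam (\<tau> j)) (- f (\<tau> j)) `
          (K + (\<lambda>a. a - D (\<tau> j)) ` addresses k P (n (\<tau> j)))) T"
        using attouch_wets_subseq[OF conv \<tau>] unfolding f_def .
      show "closed T"
        using assms unfolding Tan_def by blast
      show "(\<lambda>j. lam (\<tau> j)) \<longlonglongrightarrow> lam0" "(\<lambda>j. f (\<tau> j)) \<longlonglongrightarrow> f0"
        using tendsto_fst[OF lim] tendsto_snd[OF lim] unfolding l_eq by simp_all
      show "1 \<le> lam (\<tau> j)" for j
        using lam by blast
      show "norm (f (\<tau> j)) \<le> norm (1::real^'n)" for j
        using norm_diff_unit_cube[OF frac[of "\<tau> j"], of 0] unfolding f_def by (simp add: mem_box_cart)
      show "finite F"
        using F_int finite_int_vecs_cball[of R] by (rule finite_subset)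
      show "(\<lambda>a. a - D (\<tau> j)) ` addresses k P (n (\<tau> j)) \<inter> cball 0 R = F" for j
        using F[of j] unfolding address_window_def .
    qed
    show "\<exists>n D. 1 / real k ^ n < \<delta> \<and> real k ^ n *\<^sub>R x - D \<in> cbox 0 1 \<and> address_window k P n D R = F"
      if "\<delta> > 0" for \<delta>
    proof -
      have "eventually (\<lambda>j. 1 / real k ^ n (\<tau> j) < \<delta>) sequentially"
        using LIMSEQ_subseq_LIMSEQ[OF levels \<tau>] \<open>\<delta> > 0\<close> by (intro order_tendstoD(2)) (auto simp: comp_def)
      then obtain j where "1 / real k ^ n (\<tau> j) < \<delta>"
        using eventually_happens'[OF sequentially_bot] by blast
      then show ?thesis
        using frac F[of j] by blast
    qed
  qed
qed

lemma tangent_chart_into_cube: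
  assumes "T \<in> Tan K x" "x \<in> box 0 1" "\<rho> > 0"
  shows "\<exists>c d. c > 0 \<and> dilation c d ` ball a \<rho> \<subseteq> box 0 1 \<and>
    (\<forall>y\<in>ball a \<rho>. y \<in> T \<longleftrightarrow> dilation c d y \<in> K)"
proof -
  define C where "C = norm (1::real^'n)"
  define M where "M = norm a + \<rho>"
  obtain lam0 f0 F where "1 \<le> lam0" "f0 \<in> cbox 0 1"
    and model: "\<And>t. norm t + 1 + 2 * C \<le> M + 1 + 2 * C \<Longrightarrow>
           t \<in> T \<longleftrightarrow> t \<in> dilation lam0 (- f0) ` (K + F)"
    and levels: "\<And>\<delta>. \<delta> > 0 \<Longrightarrow> \<exists>n D. 1 / real k ^ n < \<delta> \<and> real k ^ n *\<^sub>R x - D \<in> cbox 0 1 \<and>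
           address_window k P n D (M + 1 + 2 * C) = F"
    unfolding C_def by (rule tangent_local_model[OF assms(1)]) blast
  obtain \<epsilon> where "\<epsilon> > 0" and \<epsilon>: "ball x \<epsilon> \<subseteq> box 0 1"
    using open_box assms(2) open_contains_ball by blast
  have "0 \<le> C" "0 \<le> M"
    unfolding C_def M_def using assms(3) by auto
  then obtain n D where small: "1 / real k ^ n < \<epsilon> / (M + 2 * C + 1)"
    and frac: "real k ^ n *\<^sub>R x - D \<in> cbox 0 1"
    and pattern: "address_window k P n D (M + 1 + 2 * C) = F"
    using levels[of "\<epsilon> / (M + 2 * C + 1)"] \<open>\<epsilon> > 0\<close> by auto
  define \<psi> where "\<psi> y = dilation (1 / real k ^ n) D ((1 / lam0) *\<^sub>R y + f0)" for y
  have "y \<in> T \<longleftrightarrow> \<psi> y \<in> K" "\<psi> y \<in> ball x \<epsilon>" if "y \<in> ball a \<rho>" for y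
  proof -
    define w where "w = (1 / lam0) *\<^sub>R y + f0"
    have "norm y \<le> M"
      using that norm_triangle_sub[of y a] unfolding M_def by (simp add: dist_norm norm_minus_commute)
    moreover have "norm ((1 / lam0) *\<^sub>R y) \<le> norm y"
      using \<open>1 \<le> lam0\<close> by (rule norm_scaleR_inverse_le)
    moreover have "norm f0 \<le> C"
      using norm_diff_unit_cube[OF \<open>f0 \<in> cbox 0 1\<close>, of 0] unfolding C_def by (simp add: mem_box_cart)
    ultimately have w_bound: "norm w \<le> M + C"
      unfolding w_def using norm_triangle_ineq[of "(1 / lam0) *\<^sub>R y" f0] by linarith
    have y: "y = dilation lam0 (- f0) w"
      unfolding w_def dilation_def using \<open>1 \<le> lam0\<close> by simp
    have "y \<in> T \<longleftrightarrow> y \<in> dilation lam0 (- f0) ` (K + F)"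
      using model \<open>norm y \<le> M\<close> by simp
    also have "\<dots> \<longleftrightarrow> w \<in> K + F"
      unfolding y using \<open>1 \<le> lam0\<close> by (intro inj_image_mem_iff inj_dilation) simp
    also have "\<dots> \<longleftrightarrow> \<psi> y \<in> K"
      unfolding \<psi>_def w_def[symmetric] using w_bound
      by (intro window_cell_mem_iff[OF pattern, symmetric]) (simp add: C_def)
    finally show "y \<in> T \<longleftrightarrow> \<psi> y \<in> K" .
    have "dist x (\<psi> y) \<le> (norm w + C) / real k ^ n"
      unfolding \<psi>_def w_def[symmetric] C_def by (rule dist_dilation_frac_le[OF frac])
    also have "\<dots> \<le> (M + 2 * C + 1) / real k ^ n"
      using w_bound by (intro divide_right_mono) simp_all
    also have "\<dots> < \<epsilon>"
      using small pos_less_divide_eq[of "M + 2 * C + 1" "1 / real k ^ n" \<epsilon>] \<open>0 \<le> C\<close> \<open>0 \<le> M\<close>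
      by simp
    finally show "\<psi> y \<in> ball x \<epsilon>"
      by simp
  qed
  moreover have "\<psi> = dilation (1 / real k ^ n * (1 / lam0)) (lam0 *\<^sub>R f0 + lam0 *\<^sub>R D)"
    unfolding \<psi>_def dilation_def using \<open>1 \<le> lam0\<close> by (simp add: algebra_simps)
  ultimately show ?thesis
    using \<epsilon> \<open>1 \<le> lam0\<close> k_ge_2
    by (intro exI[of _ "1 / real k ^ n * (1 / lam0)"] exI[of _ "lam0 *\<^sub>R f0 + lam0 *\<^sub>R D"]) auto
qed

lemma tangent_cube_copy:
  assumes "T \<in> Tan K x" "b \<in> T" "\<rho> > 0"
  shows "\<exists>c d. c > 0 \<and> dilation c d ` box 0 1 \<subseteq> ball b \<rho> \<and>
    (\<forall>w\<in>box 0 1. dilation c d w \<in> T \<longleftrightarrow> w \<in> K)"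
proof -
  define C where "C = norm (1::real^'n)"
  define M where "M = norm b + \<rho>"
  obtain lam0 f0 F where "1 \<le> lam0" and F_int: "\<forall>z\<in>F. int_vec z"
    and model: "\<And>t. norm t + 1 + 2 * C \<le> M + 1 + 2 * C \<Longrightarrow>
           t \<in> T \<longleftrightarrow> t \<in> dilation lam0 (- f0) ` (K + F)"
    unfolding C_def by (rule tangent_local_model[OF assms(1)]) blast
  have "norm b \<le> M"
    unfolding M_def using assms(3) by simp
  then have "b \<in> dilation lam0 (- f0) ` (K + F)"
    using model assms(2) by simp
  then obtain q0 z0 where "q0 \<in> K" "z0 \<in> F" and b: "b = dilation lam0 (- f0) (q0 + z0)"
    by (auto simp: set_plus_def)
  obtain m where "lam0 * C / \<rho> < real k ^ m"
    using real_arch_pow[of "real k"] k_ge_2 by auto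
  then have m: "lam0 * C / real k ^ m < \<rho>"
    using assms(3) k_ge_2 by (simp add: field_simps)
  obtain v q1 where v: "v \<in> addresses k P m" and "q1 \<in> K" and q0: "q0 = dilation (1 / real k ^ m) v q1"
    using mem_iff_cell[of q0 m] \<open>q0 \<in> K\<close> by blast
  define \<phi> where "\<phi> w = dilation lam0 (- f0) (dilation (1 / real k ^ m) v w + z0)" for w
  have "\<phi> w \<in> ball b \<rho>" "\<phi> w \<in> T \<longleftrightarrow> w \<in> K" if "w \<in> box 0 1" for w
  proof -
    have "\<phi> w - b = (lam0 / real k ^ m) *\<^sub>R (w - q1)"
      unfolding \<phi>_def b q0 dilation_def by (simp add: algebra_simps)
    then have "dist b (\<phi> w) = lam0 / real k ^ m * norm (w - q1)"
      using \<open>1 \<le> lam0\<close> by (simp add: dist_norm norm_minus_commute[of b])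
    also have "\<dots> \<le> lam0 / real k ^ m * C"
      using norm_diff_unit_cube[of w q1] that \<open>q1 \<in> K\<close> subset_unit_cube box_subset_cbox \<open>1 \<le> lam0\<close>
      unfolding C_def by (intro mult_left_mono) auto
    also have "\<dots> < \<rho>"
      using m by simp
    finally show "\<phi> w \<in> ball b \<rho>"
      by simp
    then have "norm (\<phi> w) \<le> M"
      unfolding M_def using norm_triangle_sub[of "\<phi> w" b] by (simp add: dist_norm norm_minus_commute)
    then have "\<phi> w \<in> T \<longleftrightarrow> \<phi> w \<in> dilation lam0 (- f0) ` (K + F)"
      using model by simp
    also have "\<dots> \<longleftrightarrow> w \<in> K"
      unfolding \<phi>_def using F_int \<open>z0 \<in> F\<close> v that \<open>1 \<le> lam0\<close>
      by (intro dilated_cell_translate_mem_iff) auto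
    finally show "\<phi> w \<in> T \<longleftrightarrow> w \<in> K" .
  qed
  moreover have "\<phi> = dilation (lam0 * (1 / real k ^ m)) (v + real k ^ m *\<^sub>R (z0 - f0))"
    unfolding \<phi>_def dilation_def using k_ge_2 by (simp add: algebra_simps)
  ultimately show ?thesis
    using \<open>1 \<le> lam0\<close> k_ge_2
    by (intro exI[of _ "lam0 * (1 / real k ^ m)"] exI[of _ "v + real k ^ m *\<^sub>R (z0 - f0)"]) auto
qed

end

theorem lemma10p3:
  fixes K :: "(real^'n) set" and x :: "real^'n"
  assumes "self_similar_sponge K"
    and "x \<in> K" and "\<forall>i. 0 < x $ i \<and> x $ i < 1"
    and "T \<in> Tan K x"
  shows "locally_self_similar T"
proof -
  obtain k P where "k \<ge> 2" "P \<subseteq> grid_points k" "compact K" "K = (\<Union>p\<in>P. sponge_map k p ` K)"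
    using assms(1) unfolding self_similar_sponge_def by blast
  then interpret sponge k P K
    by unfold_locales
  have "x \<in> box 0 1"
    using assms(3) by (simp add: mem_box_cart)
  show ?thesis
    using tangent_chart_into_cube[OF assms(4) \<open>x \<in> box 0 1\<close>] tangent_cube_copy[OF assms(4)]
    by (intro locally_self_similarI[where V = "box 0 1" and K = K])
qed

end
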